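(* Let $\lambda$ be a partition of $N$ of length $p$. Let $P(\lambda)$ be the proportion of permuted star thorn trees $(\tau,\sigma)$ of type $\lambda$ having both properties (P1) and (P2) among all permuted star thorn trees of type $\lambda$, and let $P'(\lambda)$ be the proportion of those having (P1) and (P2) among the permuted star thorn trees of type $\lambda$ having property (P1). Then $$P'(\lambda)=\frac{N}{p\,(N-p+1)}\qquad\text{and}\qquad P(\lambda)=\frac{1}{N-p+1}.$$
   Context: A star thorn tree of size $N$ with $p$ black vertices consists of a white root vertex with a left-to-right ordered sequence of $N$ descending elements, of which $p$ are edges to $p$ distinct black vertices and $N-p$ are thorns (edges with only one endpoint; these are the "white thorns"), together with $N-p$ further thorns ("black thorns") attached to the black vertices, the thorns at each black vertex being linearly ordered; trees are considered up to isomorphism preserving the orders. The degree of a black vertex is $1$ plus its number of thorns; the type of the tree is the partition of $N$ formed by the black vertices' degrees. A permuted star thorn tree of type $\lambda$ is a pair $(\tau,\sigma)$ where $\tau$ is a star thorn tree of type $\lambda$ and $\sigma$ is a bijection from the set of white thorns of $\tau$ to the set of black thorns of $\tau$. Property (P1): the leftmost descending element at the root is an edge $e_0$ (not a thorn); let $\pi_0$ be its black endpoint. When (P1) holds, define the oriented graph $G(\tau,\sigma)$ whose vertices are the black vertices of $\tau$, with, for each black vertex $\pi\neq\pi_0$, one arc $\pi\to\pi'$ defined as follows: let $e$ be the edge joining $\pi$ to the root, let $e'$ be the element immediately to the left of $e$ at the root, let $e''=e'$ if $e'$ is an edge and $e''=\sigma(e')$ if $e'$ is a thorn, and let $\pi'$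 be the black vertex to which $e''$ is attached. Property (P2): $G(\tau,\sigma)$ is an oriented tree with root $\pi_0$ (all arcs oriented towards $\pi_0$). *)

theory Defs
  imports Complex_Main "HOL-Library.Multiset" "HOL-Library.FuncSet"
begin

text \<open>
A star thorn tree of size N is a pair (w, ds):
  w  :: bool list of length N, the left-to-right sequence of descending elements
        at the white root; w!i = True iff the i-th element is an edge
        (False iff it is a white thorn);
  ds :: nat list, ds!j = degree of the black vertex attached to the j-th edge
        (counted left to right among the edges at the root); that vertex carries
        ds!j - 1 black thorns, linearly ordered and indexed 0 .. ds!j - 2.
Since all orders are fixed, there are no nontrivial isomorphisms, so such pairs
are exactly the isomorphism classes.
\<close>

type_synonym stt = "bool list \<times> nat list"

definition star_thorn_trees :: "nat multiset \<Rightarrow> stt set" where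
  "star_thorn_trees lam =
     {(w, ds). length w = sum_mset lam \<and> length (filter id w) = size lam \<and> mset ds = lam}"

definition white_thorns :: "bool list \<Rightarrow> nat set" where
  "white_thorns w = {i. i < length w \<and> \<not> w ! i}"

definition black_thorns :: "nat list \<Rightarrow> (nat \<times> nat) set" where
  "black_thorns ds = {(j, t). j < length ds \<and> t < ds ! j - 1}"

definition permuted_stt :: "nat multiset \<Rightarrow> (stt \<times> (nat \<Rightarrow> nat \<times> nat)) set" where
  "permuted_stt lam =
     {((w, ds), \<sigma>). (w, ds) \<in> star_thorn_trees lam \<and>
        \<sigma> \<in> extensional (white_thorns w) \<and>
        bij_betw \<sigma> (white_thorns w) (black_thorns ds)}"

definition P1 :: "stt \<times> (nat \<Rightarrow> nat \<times> nat) \<Rightarrow> bool" where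
  "P1 x = (let w = fst (fst x) in w \<noteq> [] \<and> hd w)"

definition edge_pos :: "bool list \<Rightarrow> nat \<Rightarrow> nat" where
  "edge_pos w j = sorted_list_of_set {i. i < length w \<and> w ! i} ! j"

definition vertex_of_edge :: "bool list \<Rightarrow> nat \<Rightarrow> nat" where
  "vertex_of_edge w i = length (filter id (take i w))"

definition arc_target :: "bool list \<Rightarrow> (nat \<Rightarrow> nat \<times> nat) \<Rightarrow> nat \<Rightarrow> nat" where
  "arc_target w \<sigma> j =
     (let i = edge_pos w j - 1 in
      if w ! i then vertex_of_edge w i else fst (\<sigma> i))"

definition arcs_G :: "stt \<times> (nat \<Rightarrow> nat \<times> nat) \<Rightarrow> (nat \<times> nat) set" where
  "arcs_G x = (let w = fst (fst x); \<sigma> = snd x; p = length (snd (fst x)) in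
      {(j, arc_target w \<sigma> j) | j. 0 < j \<and> j < p})"

definition oriented_tree :: "'a set \<Rightarrow> ('a \<times> 'a) set \<Rightarrow> 'a \<Rightarrow> bool" where
  "oriented_tree V A r =
     (r \<in> V \<and> A \<subseteq> V \<times> V \<and> (\<forall>y. (r, y) \<notin> A) \<and>
      (\<forall>v\<in>V - {r}. \<exists>!y. (v, y) \<in> A) \<and>
      (\<forall>v\<in>V. (v, r) \<in> A\<^sup>*))"

text \<open>Property (P2) (meaningful when (P1) holds): G is an oriented tree rooted at
  the black vertex 0, i.e. the endpoint of the leftmost edge.\<close>
definition P2 :: "stt \<times> (nat \<Rightarrow> nat \<times> nat) \<Rightarrow> bool" where
  "P2 x = oriented_tree {0..<length (snd (fst x))} (arcs_G x) 0"

end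

theory Submission
  imports Defs "HOL-Combinatorics.Multiset_Permutations"
begin

text \<open>
  Under (P1) the root of G is the vertex of the first edge. A vertex whose edge is preceded by an
  edge points to the previous vertex; a vertex whose edge is preceded by a white thorn \<open>u\<close> points
  to the owner of the black thorn \<open>\<sigma> u\<close>. The fixed arcs thus form a forest whose roots are the
  root of G and the vertices of the second kind, and the arcs of the latter are chosen by \<open>\<sigma>\<close>.
  Attaching these vertices one at a time, a choice is fatal exactly when it points into the subtree
  of the vertex being attached; averaging over the choices shows that among the \<open>q!\<close> bijections
  (\<open>q = N - p\<close>) exactly \<open>a (q - 1)!\<close> make G a tree, where \<open>a\<close> is the number of black thorns
  whose owner already reaches the root, i.e. the black thorns of the vertices of the initial run of
  edges. Summing over the words of edges and thorns (a hockey-stick identity) and over the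
  orderings of the degrees (each vertex carries on average \<open>q / p\<close> black thorns) gives
  \<open>p \<cdot> #(P1 \<and> P2) = C(N, p - 1) D q!\<close>, while \<open>#P1 = C(N - 1, p - 1) D q!\<close> and
  \<open>#all = C(N, p) D q!\<close>, with \<open>D\<close> the number of orderings of \<open>\<lambda>\<close>.
\<close>

section \<open>Injections\<close>

definition injections :: "'a set \<Rightarrow> 'b set \<Rightarrow> (('a \<Rightarrow> 'b) \<Rightarrow> bool) \<Rightarrow> ('a \<Rightarrow> 'b) set" where
  "injections A B P = {f \<in> extensional A. inj_on f A \<and> f ` A \<subseteq> B \<and> P f}"

lemma finite_injections: "finite A \<Longrightarrow> finite B \<Longrightarrow> finite (injections A B P)"
proof (rule finite_subset)
  show "injections A B P \<subseteq> PiE A (\<lambda>_. B)"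
    by (auto simp: injections_def PiE_def Pi_def)
qed (simp add: finite_PiE)

lemma card_injections_fix:
  assumes "s \<in> A" "t \<in> B"
  shows "card {f \<in> injections A B P. f s = t} = card (injections (A - {s}) (B - {t}) (\<lambda>f. P (f(s := t))))"
proof (rule bij_betw_same_card[of "\<lambda>f. f(s := undefined)"], rule bij_betw_byWitness[of _ "\<lambda>f. f(s := t)"])
  show "\<forall>f\<in>{f \<in> injections A B P. f s = t}. (f(s := undefined))(s := t) = f"
    by auto
  show "\<forall>f\<in>injections (A - {s}) (B - {t}) (\<lambda>f. P (f(s := t))). (f(s := t))(s := undefined) = f"
    by (auto simp: injections_def extensional_def fun_eq_iff)
  show "(\<lambda>f. f(s := t)) ` injections (A - {s}) (B - {t}) (\<lambda>f. P (f(s := t))) \<subseteq> {f \<in> injections A B P. f s = t}"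
  proof (rule image_subsetI)
    fix f assume "f \<in> injections (A - {s}) (B - {t}) (\<lambda>f. P (f(s := t)))"
    then show "f(s := t) \<in> {f \<in> injections A B P. f s = t}"
      using assms by (auto simp: injections_def extensional_def inj_on_def)
  qed
  show "(\<lambda>f. f(s := undefined)) ` {f \<in> injections A B P. f s = t}
      \<subseteq> injections (A - {s}) (B - {t}) (\<lambda>f. P (f(s := t)))"
  proof clarify
    fix f assume f: "f \<in> injections A B P" "t = f s"
    then have "f(s := f s) = f" "\<forall>x\<in>A - {s}. f x \<noteq> f s"
      using assms(1) by (auto simp: injections_def inj_on_def)
    then show "f(s := undefined) \<in> injections (A - {s}) (B - {f s}) (\<lambda>g. P (g(s := f s)))"
      using f by (auto simp: injections_def extensional_def inj_on_def)
  qed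
qed

lemma card_injections_split:
  assumes "finite A" "finite B" "s \<in> A"
  shows "card (injections A B P) = (\<Sum>t\<in>B. card (injections (A - {s}) (B - {t}) (\<lambda>f. P (f(s := t)))))"
proof -
  have "injections A B P = (\<Union>t\<in>B. {f \<in> injections A B P. f s = t})"
    using assms(3) by (auto simp: injections_def)
  also have "card \<dots> = (\<Sum>t\<in>B. card {f \<in> injections A B P. f s = t})"
    using assms finite_injections[of A B P] by (intro card_UN_disjoint) auto
  also have "\<dots> = (\<Sum>t\<in>B. card (injections (A - {s}) (B - {t}) (\<lambda>f. P (f(s := t)))))"
    using assms(3) by (intro sum.cong refl card_injections_fix)
  finally show ?thesis .
qed

lemma card_injections:
  assumes "finite A" "finite B" "card A \<le> card B"
  shows "card (injections A B (\<lambda>_. True)) * fact (card B - card A) = fact (card B)"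
  using assms
proof (induction A arbitrary: B rule: finite_induct)
  case empty
  have singleton: "injections {} B (\<lambda>_. True) = {\<lambda>_. undefined}"
    by (auto simp: injections_def)
  show ?case
    unfolding singleton by simp
next
  case (insert s A)
  have "card (injections (insert s A) B (\<lambda>_. True)) * fact (card B - card (insert s A))
      = (\<Sum>t\<in>B. card (injections A (B - {t}) (\<lambda>_. True)) * fact (card (B - {t}) - card A))"
    using card_injections_split[of "insert s A" B s] insert by (simp add: sum_distrib_right)
  also have "\<dots> = (\<Sum>t\<in>B. fact (card B - 1))"
    using insert by (intro sum.cong refl) (subst insert.IH, auto)
  also have "\<dots> = fact (card B)"
    using insert by (cases "card B") auto
  finally show ?case .
qed

lemma bij_betw_iff_inj_on_into:
  assumes "finite A" "finite B" "card A = card B"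
  shows "bij_betw f A B \<longleftrightarrow> inj_on f A \<and> f ` A \<subseteq> B"
proof
  assume "inj_on f A \<and> f ` A \<subseteq> B"
  moreover then have "card (f ` A) = card B" using assms by (simp add: card_image)
  ultimately show "bij_betw f A B" using assms by (metis bij_betw_def card_subset_eq)
qed (auto simp: bij_betw_def)

section \<open>Completing a functional digraph to a tree\<close>

definition fun_arcs :: "'v set \<Rightarrow> 'v \<Rightarrow> ('v \<Rightarrow> 'v) \<Rightarrow> ('v \<times> 'v) set" where
  "fun_arcs V r f = {(v, f v) | v. v \<in> V \<and> v \<noteq> r}"

definition reaches_root :: "'v set \<Rightarrow> 'v \<Rightarrow> ('v \<Rightarrow> 'v) \<Rightarrow> bool" where
  "reaches_root V r f \<longleftrightarrow> (\<forall>v\<in>V. (v, r) \<in> (fun_arcs V r f)\<^sup>*)"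

definition rooted_forest :: "'v set \<Rightarrow> 'v \<Rightarrow> 'v set \<Rightarrow> ('v \<Rightarrow> 'v) \<Rightarrow> bool" where
  "rooted_forest V r F g \<longleftrightarrow> (\<forall>v\<in>V. \<exists>u\<in>insert r F. (v, u) \<in> (fun_arcs (V - F) r g)\<^sup>*)"

text \<open>The abstract shape of the graph G(tau, sigma): a vertex \<open>v \<in> F\<close> owns the white thorn
  \<open>h v\<close> and points to the vertex owning the black thorn \<open>\<sigma> (h v)\<close>; every other vertex
  points to \<open>g v\<close>.\<close>

definition fill_arcs ::
    "'v set \<Rightarrow> ('v \<Rightarrow> 'v) \<Rightarrow> ('v \<Rightarrow> 'w) \<Rightarrow> ('t \<Rightarrow> 'v) \<Rightarrow> ('w \<Rightarrow> 't) \<Rightarrow> 'v \<Rightarrow> 'v" where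
  "fill_arcs F g h own \<sigma> v = (if v \<in> F then own (\<sigma> (h v)) else g v)"

lemma fun_arcs_iff: "(x, y) \<in> fun_arcs V r f \<longleftrightarrow> x \<in> V \<and> x \<noteq> r \<and> y = f x"
  by (auto simp: fun_arcs_def)

lemma fun_arcs_fun_upd:
  assumes "s \<in> V" "s \<noteq> r" "s \<notin> F"
  shows "fun_arcs (V - F) r (g(s := u)) = insert (s, u) (fun_arcs (V - insert s F) r g)"
  using assms by (auto simp: fun_arcs_iff split: if_splits)

lemma rtrancl_fun_arcs_fun_upd:
  assumes "s \<in> V" "s \<noteq> r" "s \<notin> F"
  shows "(fun_arcs (V - F) r (g(s := u)))\<^sup>* = (fun_arcs (V - insert s F) r g)\<^sup>* \<union>
    {(x, y). (x, s) \<in> (fun_arcs (V - insert s F) r g)\<^sup>* \<and> (u, y) \<in> (fun_arcs (V - insert s F) r g)\<^sup>*}"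
  using assms by (simp add: fun_arcs_fun_upd rtrancl_insert)

lemma fill_arcs_empty [simp]: "fill_arcs {} g h own \<sigma> = g"
  by (simp add: fill_arcs_def fun_eq_iff)

lemma fill_arcs_insert:
  assumes "s \<notin> F" "inj_on h (insert s F)"
  shows "fill_arcs (insert s F) g h own (\<sigma>(h s := t)) = fill_arcs F (g(s := own t)) h own \<sigma>"
  using assms by (auto simp: fill_arcs_def fun_eq_iff inj_on_def)

lemma reaches_root_if_rooted_forest_empty: "rooted_forest V r {} g \<Longrightarrow> reaches_root V r g"
  by (simp add: rooted_forest_def reaches_root_def)

lemma fun_arcs_sink_unique:
  assumes "(x, a) \<in> (fun_arcs V r f)\<^sup>*" "(x, b) \<in> (fun_arcs V r f)\<^sup>*" "a \<notin> V - {r}" "b \<notin> V - {r}"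
  shows "a = b"
proof -
  have "single_valued (fun_arcs V r f)"
    by (auto simp: single_valued_def fun_arcs_iff)
  then have "(a, b) \<in> (fun_arcs V r f)\<^sup>* \<or> (b, a) \<in> (fun_arcs V r f)\<^sup>*"
    using assms(1,2) by (rule single_valued_confluent)
  then show ?thesis
    using assms(3,4) by (auto simp: fun_arcs_iff elim: converse_rtranclE)
qed

text \<open>Choosing for \<open>s\<close> an arc into its own subtree closes a cycle through \<open>s\<close> that avoids
  the root: the set of vertices reaching \<open>s\<close> is closed under every completion.\<close>

lemma not_reaches_root_if_cycle:
  assumes cycle: "(u, s) \<in> (fun_arcs (V - insert s F) r g)\<^sup>*" and "s \<in> V" "s \<noteq> r" "s \<notin> F"
  shows "\<not> reaches_root V r (fill_arcs F (g(s := u)) h own \<sigma>)"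
proof
  let ?R = "fun_arcs (V - insert s F) r g" and ?f = "fill_arcs F (g(s := u)) h own \<sigma>"
  define C where "C = {v. (v, s) \<in> ?R\<^sup>*}"
  assume "reaches_root V r ?f"
  then have "(s, r) \<in> (fun_arcs V r ?f)\<^sup>*"
    using \<open>s \<in> V\<close> by (simp add: reaches_root_def)
  moreover have "fun_arcs V r ?f `` C \<subseteq> C"
  proof
    fix y assume "y \<in> fun_arcs V r ?f `` C"
    then obtain x where x: "x \<in> C" "x \<in> V" "x \<noteq> r" "y = ?f x"
      by (auto simp: fun_arcs_iff)
    show "y \<in> C"
    proof (cases "x = s")
      case True
      then show ?thesis using x cycle \<open>s \<notin> F\<close> by (simp add: fill_arcs_def C_def)
    next
      case False
      then obtain z where "(x, z) \<in> ?R" "(z, s) \<in> ?R\<^sup>*"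
        using x(1) by (auto simp: C_def elim: converse_rtranclE)
      then show ?thesis using x False by (auto simp: fun_arcs_iff fill_arcs_def C_def)
    qed
  qed
  moreover have "s \<in> C" by (simp add: C_def)
  ultimately have "r \<in> C"
    using Image_closed_trancl[of "fun_arcs V r ?f" C] by blast
  then show False
    using \<open>s \<noteq> r\<close> by (auto simp: C_def fun_arcs_iff elim: converse_rtranclE)
qed

lemma rooted_forest_fun_upd:
  assumes forest: "rooted_forest V r (insert s F) g"
    and "u \<in> V" "(u, s) \<notin> (fun_arcs (V - insert s F) r g)\<^sup>*" "s \<in> V" "s \<noteq> r" "s \<notin> F"
  shows "rooted_forest V r F (g(s := u))"
  unfolding rooted_forest_def
proof
  let ?R = "fun_arcs (V - insert s F) r g"
  note R' = rtrancl_fun_arcs_fun_upd[OF assms(4-6), of g u]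
  fix v assume "v \<in> V"
  then obtain x where x: "x \<in> insert r (insert s F)" "(v, x) \<in> ?R\<^sup>*"
    using forest by (auto simp: rooted_forest_def)
  obtain y where y: "y \<in> insert r (insert s F)" "(u, y) \<in> ?R\<^sup>*"
    using forest \<open>u \<in> V\<close> by (auto simp: rooted_forest_def)
  have "y \<noteq> s" using y assms(3) by auto
  show "\<exists>x\<in>insert r F. (v, x) \<in> (fun_arcs (V - F) r (g(s := u)))\<^sup>*"
  proof (cases "x = s")
    case True
    then show ?thesis using x y \<open>y \<noteq> s\<close> R' by auto
  next
    case False
    then show ?thesis using x R' by auto
  qed
qed

lemma card_reaches_root_injections_insert:
  assumes "s \<notin> F" "s \<in> V" "s \<noteq> r" "finite W" "finite T" "inj_on h (insert s F)" "h s \<in> W"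
    "card W \<le> card T"
  shows "card (injections W T (\<lambda>\<sigma>. reaches_root V r (fill_arcs (insert s F) g h own \<sigma>))) * fact (card T - card W)
    = (\<Sum>t\<in>T - {t\<in>T. (own t, s) \<in> (fun_arcs (V - insert s F) r g)\<^sup>*}.
         card (injections (W - {h s}) (T - {t}) (\<lambda>\<sigma>. reaches_root V r (fill_arcs F (g(s := own t)) h own \<sigma>)))
         * fact (card (T - {t}) - card (W - {h s})))"
  (is "_ = (\<Sum>t\<in>T - ?C. ?c t * _)")
proof -
  have "card (injections W T (\<lambda>\<sigma>. reaches_root V r (fill_arcs (insert s F) g h own \<sigma>))) = (\<Sum>t\<in>T. ?c t)"
    using card_injections_split[OF assms(4,5,7)] assms(1,6) by (simp add: fill_arcs_insert)
  also have "\<dots> = (\<Sum>t\<in>T - ?C. ?c t)"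
  proof (rule sum.mono_neutral_right)
    have "injections (W - {h s}) (T - {t}) (\<lambda>\<sigma>. reaches_root V r (fill_arcs F (g(s := own t)) h own \<sigma>)) = {}"
      if "(own t, s) \<in> (fun_arcs (V - insert s F) r g)\<^sup>*" for t
      using not_reaches_root_if_cycle[OF that assms(2,3,1)] by (auto simp: injections_def)
    then show "\<forall>t\<in>T - (T - ?C). ?c t = 0"
      by auto
  qed (use assms(5) in auto)
  finally show ?thesis
    using assms(4,5,7,8) card_gt_0_iff[of W] by (auto simp: sum_distrib_right intro!: sum.cong)
qed

text \<open>Once the free vertex \<open>s\<close> is attached to the owner of \<open>t\<close>, the thorns reaching the root are
  those of \<open>A\<close> (reaching the root before) together with, if \<open>t \<in> A\<close>, those of \<open>C\<close> (reaching \<open>s\<close>),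
  and \<open>t\<close> itself is used up.\<close>

lemma sum_card_redirect:
  assumes "finite T" "A \<subseteq> T" "C \<subseteq> T" "A \<inter> C = {}"
  shows "(\<Sum>t\<in>T - C. card ((if t \<in> A then A \<union> C else A) - {t})) = card A * (card T - 1)"
proof -
  have fin: "finite A" "finite C" using assms by (auto intro: finite_subset)
  have AC: "card (A \<union> C) = card A + card C" and le: "card A + card C \<le> card T"
    using assms fin card_mono[of T "A \<union> C"] by (auto simp: card_Un_disjoint)
  have rest: "card (T - C - A) = card T - card C - card A"
  proof -
    have "T - C - A = T - (A \<union> C)" by auto
    then show ?thesis using assms fin AC by (simp add: card_Diff_subset)
  qed
  let ?f = "\<lambda>t. card ((if t \<in> A then A \<union> C else A) - {t})"
  have "sum ?f (T - C) = card A * (card A + card C - 1) + (card T - card C - card A) * card A"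
    using sum.subset_diff[of A "T - C" ?f] assms fin AC rest by (auto simp: add.commute)
  also have "\<dots> = card A * ((card A + card C - 1) + (card T - card C - card A))"
    by (simp add: algebra_simps)
  also have "\<dots> = card A * (card T - 1)"
    using le by (cases "card A = 0") simp_all
  finally show ?thesis .
qed

lemma card_reaches_root_injections_singleton:
  assumes "s \<in> V" "s \<noteq> r" "finite W" "finite T" "h s \<in> W" "card W \<le> card T" "own ` T \<subseteq> V"
    "rooted_forest V r {s} g"
  shows "card (injections W T (\<lambda>\<sigma>. reaches_root V r (fill_arcs {s} g h own \<sigma>))) * fact (card T - card W)
       = card {t\<in>T. (own t, r) \<in> (fun_arcs (V - {s}) r g)\<^sup>*} * fact (card T - 1)"
proof -
  let ?R = "fun_arcs (V - {s}) r g"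
  have all: "injections (W - {h s}) (T - {t}) (\<lambda>\<sigma>. reaches_root V r (fill_arcs {} (g(s := own t)) h own \<sigma>))
      = injections (W - {h s}) (T - {t}) (\<lambda>_. True)" if "t \<in> T - {t\<in>T. (own t, s) \<in> ?R\<^sup>*}" for t
  proof -
    have "rooted_forest V r {} (g(s := own t))"
      using rooted_forest_fun_upd[of V r s "{}" g "own t"] assms that by auto
    then show ?thesis
      by (simp add: injections_def reaches_root_if_rooted_forest_empty)
  qed
  have partition: "T - {t\<in>T. (own t, s) \<in> ?R\<^sup>*} = {t\<in>T. (own t, r) \<in> ?R\<^sup>*}"
  proof -
    have "(own t, r) \<in> ?R\<^sup>* \<or> (own t, s) \<in> ?R\<^sup>*" if "t \<in> T" for t
      using assms that by (auto simp: rooted_forest_def)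
    moreover have "\<not> ((own t, r) \<in> ?R\<^sup>* \<and> (own t, s) \<in> ?R\<^sup>*)" for t
      using fun_arcs_sink_unique[of "own t" r "V - {s}" r g s] assms(1,2) by auto
    ultimately show ?thesis by blast
  qed
  have "card (injections W T (\<lambda>\<sigma>. reaches_root V r (fill_arcs {s} g h own \<sigma>))) * fact (card T - card W)
      = (\<Sum>t\<in>T - {t\<in>T. (own t, s) \<in> ?R\<^sup>*}.
          card (injections (W - {h s}) (T - {t}) (\<lambda>\<sigma>. reaches_root V r (fill_arcs {} (g(s := own t)) h own \<sigma>)))
          * fact (card (T - {t}) - card (W - {h s})))"
    using card_reaches_root_injections_insert[of s "{}" V r W T h g own] assms by simp
  also have "\<dots> = (\<Sum>t\<in>T - {t\<in>T. (own t, s) \<in> ?R\<^sup>*}. fact (card T - 1))"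
  proof (intro sum.cong refl)
    fix t assume "t \<in> T - {t\<in>T. (own t, s) \<in> ?R\<^sup>*}"
    then show "card (injections (W - {h s}) (T - {t}) (\<lambda>\<sigma>. reaches_root V r (fill_arcs {} (g(s := own t)) h own \<sigma>)))
        * fact (card (T - {t}) - card (W - {h s})) = fact (card T - 1)"
      using card_injections[of "W - {h s}" "T - {t}"] all assms by simp
  qed
  finally show ?thesis
    unfolding partition by simp
qed

lemma card_reaches_root_injections_ne:
  assumes "finite F" "F \<noteq> {}" "F \<subseteq> V - {r}" "finite W" "finite T" "inj_on h F" "h ` F \<subseteq> W"
    "card W \<le> card T" "own ` T \<subseteq> V" "rooted_forest V r F g"
  shows "card (injections W T (\<lambda>\<sigma>. reaches_root V r (fill_arcs F g h own \<sigma>))) * fact (card T - card W)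
       = card {t\<in>T. (own t, r) \<in> (fun_arcs (V - F) r g)\<^sup>*} * fact (card T - 1)"
  using assms(1,2,3-)
proof (induction F arbitrary: g W T rule: finite_ne_induct)
  case (singleton s)
  then show ?case by (intro card_reaches_root_injections_singleton) auto
next
  case (insert s F)
  let ?R = "fun_arcs (V - insert s F) r g"
  let ?A = "{t\<in>T. (own t, r) \<in> ?R\<^sup>*}" and ?C = "{t\<in>T. (own t, s) \<in> ?R\<^sup>*}"
  let ?c = "\<lambda>t. card (injections (W - {h s}) (T - {t})
                 (\<lambda>\<sigma>. reaches_root V r (fill_arcs F (g(s := own t)) h own \<sigma>)))"
  have s: "s \<in> V" "s \<noteq> r" "h s \<in> W" using insert.prems by auto
  have c: "?c t * fact (card (T - {t}) - card (W - {h s}))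
      = card ((if t \<in> ?A then ?A \<union> ?C else ?A) - {t}) * fact (card T - 2)"
    if t: "t \<in> T - ?C" for t
  proof -
    have A: "{t'\<in>T - {t}. (own t', r) \<in> (fun_arcs (V - F) r (g(s := own t)))\<^sup>*}
        = (if t \<in> ?A then ?A \<union> ?C else ?A) - {t}"
      using t s insert.hyps by (auto simp: rtrancl_fun_arcs_fun_upd)
    have T: "card (T - {t}) - 1 = card T - 2"
      using t insert.prems by simp
    have "rooted_forest V r F (g(s := own t))"
      using rooted_forest_fun_upd[of V r s F g "own t"] insert.prems insert.hyps s t by auto
    moreover have "h ` F \<subseteq> W - {h s}"
      using insert.prems insert.hyps by (auto simp: inj_on_def)
    ultimately have "?c t * fact (card (T - {t}) - card (W - {h s}))
        = card {t'\<in>T - {t}. (own t', r) \<in> (fun_arcs (V - F) r (g(s := own t)))\<^sup>*} * fact (card (T - {t}) - 1)"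
      using insert.prems s t by (intro insert.IH) (auto simp del: fun_upd_apply)
    then show ?thesis
      unfolding A T .
  qed
  have "card (insert s F) \<le> card T"
    using insert.prems card_image[of h "insert s F"] card_mono[of W "h ` insert s F"] by auto
  moreover have "card F \<noteq> 0" using insert.hyps by simp
  ultimately obtain m where "card T = Suc (Suc m)"
    using insert.hyps by (metis Suc_le_D card_insert_disjoint not0_implies_Suc Suc_le_mono)
  then have T2: "(card T - 1) * fact (card T - 2) = fact (card T - 1)"
    by simp
  have disj: "?A \<inter> ?C = {}"
    using fun_arcs_sink_unique[of _ r "V - insert s F" r g s] s by auto
  have "card (injections W T (\<lambda>\<sigma>. reaches_root V r (fill_arcs (insert s F) g h own \<sigma>))) * fact (card T - card W)
      = (\<Sum>t\<in>T - ?C. card ((if t \<in> ?A then ?A \<union> ?C else ?A) - {t})) * fact (card T - 2)"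
    using card_reaches_root_injections_insert[of s F V r W T h g own] insert.prems insert.hyps s c
    by (simp add: sum_distrib_right)
  also have "\<dots> = card ?A * fact (card T - 1)"
    using sum_card_redirect[of T ?A ?C] insert.prems disj T2 by auto
  finally show ?case .
qed

lemma card_reaches_root_injections:
  assumes "finite F" "F \<subseteq> V - {r}" "finite W" "finite T" "T \<noteq> {}" "inj_on h F" "h ` F \<subseteq> W"
    "card W \<le> card T" "own ` T \<subseteq> V" "rooted_forest V r F g"
  shows "card (injections W T (\<lambda>\<sigma>. reaches_root V r (fill_arcs F g h own \<sigma>))) * fact (card T - card W)
       = card {t\<in>T. (own t, r) \<in> (fun_arcs (V - F) r g)\<^sup>*} * fact (card T - 1)"
proof (cases "F = {}")
  case True
  then have "reaches_root V r (fill_arcs F g h own \<sigma>)" for \<sigma>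
    using assms(10) reaches_root_if_rooted_forest_empty by simp
  then have "injections W T (\<lambda>\<sigma>. reaches_root V r (fill_arcs F g h own \<sigma>)) = injections W T (\<lambda>_. True)"
    by (simp add: injections_def)
  moreover have "{t\<in>T. (own t, r) \<in> (fun_arcs (V - F) r g)\<^sup>*} = T"
    using True assms(9,10) by (auto simp: rooted_forest_def)
  moreover have "fact (card T) = card T * fact (card T - 1)"
    using assms(4,5) by (simp add: card_gt_0_iff fact_reduce)
  ultimately show ?thesis
    using card_injections[OF assms(3,4,8)] by simp
next
  case False
  then show ?thesis
    using assms card_reaches_root_injections_ne[of F V r W T h own g] by blast
qed

section \<open>Boolean words and permutations of a multiset\<close>

definition bool_lists :: "nat \<Rightarrow> nat \<Rightarrow> bool list set" where
  "bool_lists n k = {w. length w = n \<and> length (filter id w) = k}"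

lemma finite_bool_lists: "finite (bool_lists n k)"
  by (rule finite_subset[OF _ finite_lists_length_eq[of "UNIV :: bool set" n]]) (auto simp: bool_lists_def)

lemma card_bool_lists: "card (bool_lists n k) = n choose k"
proof (induction n arbitrary: k)
  case 0
  have "bool_lists 0 k = (if k = 0 then {[]} else {})"
    by (auto simp: bool_lists_def)
  then show ?case by simp
next
  case (Suc n)
  have split: "bool_lists (Suc n) k
      = (Cons True) ` {u. length u = n \<and> Suc (length (filter id u)) = k} \<union> (Cons False) ` bool_lists n k"
  proof (intro equalityI subsetI)
    fix w assume "w \<in> bool_lists (Suc n) k"
    then show "w \<in> (Cons True) ` {u. length u = n \<and> Suc (length (filter id u)) = k} \<union> (Cons False) ` bool_lists n k"
      by (cases w) (auto simp: bool_lists_def split: if_splits)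
  qed (auto simp: bool_lists_def)
  have False_part: "card ((Cons False) ` bool_lists n k) = n choose k"
    using Suc.IH by (simp add: card_image)
  show ?case
  proof (cases k)
    case 0
    then show ?thesis using False_part unfolding split by simp
  next
    case (Suc k')
    then have "{u. length u = n \<and> Suc (length (filter id u)) = k} = bool_lists n k'"
      by (auto simp: bool_lists_def)
    moreover have "(Cons True) ` bool_lists n k' \<inter> (Cons False) ` bool_lists n k = {}"
      by auto
    ultimately show ?thesis
      using Suc.IH False_part Suc unfolding split
      by (simp add: card_Un_disjoint card_image finite_bool_lists)
  qed
qed

lemma card_bool_lists_initial_true:
  assumes "v < k" "k \<le> n"
  shows "card {w \<in> bool_lists n k. \<forall>i\<le>v. w ! i} = (n - Suc v) choose (k - Suc v)"
proof -
  let ?pre = "replicate (Suc v) True"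
  have "{w \<in> bool_lists n k. \<forall>i\<le>v. w ! i} = (\<lambda>u. ?pre @ u) ` bool_lists (n - Suc v) (k - Suc v)"
  proof (intro equalityI subsetI)
    fix w assume w: "w \<in> {w \<in> bool_lists n k. \<forall>i\<le>v. w ! i}"
    then have pre: "take (Suc v) w = ?pre"
      using assms by (intro nth_equalityI) (auto simp: bool_lists_def simp del: replicate_Suc)
    then have "drop (Suc v) w \<in> bool_lists (n - Suc v) (k - Suc v)"
      using w arg_cong[OF append_take_drop_id[of "Suc v" w], of "\<lambda>u. length (filter id u)"]
      by (auto simp: bool_lists_def simp del: append_take_drop_id)
    then show "w \<in> (\<lambda>u. ?pre @ u) ` bool_lists (n - Suc v) (k - Suc v)"
      using pre by (metis append_take_drop_id image_eqI)
  qed (use assms in \<open>auto simp: bool_lists_def nth_append simp del: replicate_Suc\<close>)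
  moreover have "inj_on (\<lambda>u. ?pre @ u) (bool_lists (n - Suc v) (k - Suc v))"
    by (rule inj_onI) simp
  ultimately show ?thesis by (simp add: card_image card_bool_lists)
qed

lemma sum_bool_lists_initial_true:
  assumes "1 \<le> k" "k \<le> n"
  shows "(\<Sum>v<k. card {w \<in> bool_lists n k. \<forall>i\<le>v. w ! i}) = n choose (k - 1)"
proof -
  have "(\<Sum>v<k. card {w \<in> bool_lists n k. \<forall>i\<le>v. w ! i}) = (\<Sum>v\<le>k - 1. (n - 1 - v) choose (k - 1 - v))"
    using assms card_bool_lists_initial_true[of _ k n]
    by (intro sum.reindex_cong[of id]) (auto simp: lessThan_Suc_atMost[symmetric])
  also have "\<dots> = n choose (k - 1)"
    using sum_choose_diagonal[of "k - 1" "n - 1"] assms by simp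
  finally show ?thesis .
qed

lemma size_le_sum_mset: "\<forall>x\<in>#A. 0 < x \<Longrightarrow> size A \<le> sum_mset (A :: nat multiset)"
  by (induction A) auto

lemma sum_mset_pred:
  fixes A :: "nat multiset"
  assumes "\<forall>x\<in>#A. 0 < x"
  shows "(\<Sum>x\<in>#A. x - 1) = sum_mset A - size A"
  using assms
proof (induction A)
  case (add x A)
  then show ?case using size_le_sum_mset[of A] by auto
qed simp

lemma sum_permutations_of_multiset_nth:
  assumes "i < size A"
  shows "(\<Sum>xs\<in>permutations_of_multiset A. f (xs ! i)) = (\<Sum>xs\<in>permutations_of_multiset A. f (xs ! 0))"
proof -
  let ?swap = "\<lambda>xs. xs[0 := xs ! i, i := xs ! 0]"
  have swap: "?swap xs \<in> permutations_of_multiset A" "?swap (?swap xs) = xs" "?swap xs ! 0 = xs ! i"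
    if "xs \<in> permutations_of_multiset A" for xs
  proof -
    have len: "i < length xs" "0 < length xs"
      using that assms by (auto simp: permutations_of_multiset_def)
    show "?swap xs \<in> permutations_of_multiset A"
      using that mset_swap[OF len] by (simp add: permutations_of_multiset_def)
    show "?swap (?swap xs) = xs"
      using len by (intro nth_equalityI) (auto simp: nth_list_update)
    show "?swap xs ! 0 = xs ! i"
      using len by (simp add: nth_list_update)
  qed
  show ?thesis
    by (rule sum.reindex_bij_witness[where i = ?swap and j = ?swap]) (use swap in auto)
qed

lemma size_mult_sum_hd_permutations_of_multiset:
  fixes f :: "'a \<Rightarrow> nat"
  shows "size A * (\<Sum>xs\<in>permutations_of_multiset A. f (xs ! 0))
    = card (permutations_of_multiset A) * (\<Sum>x\<in>#A. f x)"
proof -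
  have "(\<Sum>i<size A. \<Sum>xs\<in>permutations_of_multiset A. f (xs ! i))
      = (\<Sum>i<size A. \<Sum>xs\<in>permutations_of_multiset A. f (xs ! 0))"
    by (intro sum.cong refl sum_permutations_of_multiset_nth) simp
  then have "size A * (\<Sum>xs\<in>permutations_of_multiset A. f (xs ! 0))
      = (\<Sum>i<size A. \<Sum>xs\<in>permutations_of_multiset A. f (xs ! i))"
    by simp
  also have "\<dots> = (\<Sum>xs\<in>permutations_of_multiset A. \<Sum>i<length xs. f (xs ! i))"
    by (subst sum.swap) (auto simp: permutations_of_multiset_def intro!: sum.cong)
  also have "\<dots> = (\<Sum>xs\<in>permutations_of_multiset A. \<Sum>x\<in>#A. f x)"
  proof (intro sum.cong refl)
    fix xs assume "xs \<in> permutations_of_multiset A"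
    then have "A = mset xs" by (simp add: permutations_of_multiset_def)
    moreover have "(\<Sum>i<length xs. f (xs ! i)) = sum_list (map f xs)"
      by (simp add: sum_list_sum_nth atLeast0LessThan)
    ultimately show "(\<Sum>i<length xs. f (xs ! i)) = (\<Sum>x\<in>#A. f x)"
      by (simp flip: sum_mset_sum_list)
  qed
  finally show ?thesis by simp
qed

lemma sum_initial_true_permutations_of_multiset:
  fixes f :: "'a \<Rightarrow> nat"
  assumes "1 \<le> size A" "size A \<le> n"
  shows "(\<Sum>w\<in>bool_lists n (size A). \<Sum>xs\<in>permutations_of_multiset A.
            \<Sum>v<size A. if \<forall>i\<le>v. w ! i then f (xs ! v) else 0)
    = (n choose (size A - 1)) * (\<Sum>xs\<in>permutations_of_multiset A. f (xs ! 0))"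
proof -
  let ?W = "bool_lists n (size A)"
  define S where "S = (\<Sum>xs\<in>permutations_of_multiset A. f (xs ! 0))"
  have "(\<Sum>xs\<in>permutations_of_multiset A. f (xs ! v)) = S" if "v < size A" for v
    unfolding S_def by (rule sum_permutations_of_multiset_nth[OF that])
  then have "(\<Sum>w\<in>?W. \<Sum>xs\<in>permutations_of_multiset A. \<Sum>v<size A. if \<forall>i\<le>v. w ! i then f (xs ! v) else 0)
      = (\<Sum>v<size A. \<Sum>w\<in>?W. if \<forall>i\<le>v. w ! i then S else 0)"
    by (subst sum.swap, subst (2) sum.swap) (auto intro!: sum.cong)
  also have "\<dots> = (\<Sum>v<size A. card {w \<in> ?W. \<forall>i\<le>v. w ! i}) * S"
    by (simp add: sum.inter_filter[symmetric] finite_bool_lists sum_distrib_right)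
  finally show ?thesis
    using sum_bool_lists_initial_true[OF assms] by (simp add: S_def)
qed

section \<open>Edges at the root\<close>

lemma card_edge_positions: "card {i. i < length w \<and> w ! i} = length (filter id w)"
  by (simp add: length_filter_conv_card)

lemma edge_pos_strict_mono:
  assumes "i < j" "j < length (filter id w)"
  shows "edge_pos w i < edge_pos w j"
  using sorted_wrt_nth_less[OF strict_sorted_list_of_set[of "{i. i < length w \<and> w ! i}"] assms(1)] assms(2)
  by (simp add: edge_pos_def card_edge_positions)

lemma edge_pos_is_edge:
  assumes "j < length (filter id w)"
  shows "edge_pos w j < length w \<and> w ! edge_pos w j"
  using nth_mem[of j "sorted_list_of_set {i. i < length w \<and> w ! i}"] assms
  by (simp add: edge_pos_def card_edge_positions)

lemma edge_pos_surj:
  assumes "i < length w" "w ! i"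
  obtains j where "j < length (filter id w)" "edge_pos w j = i"
proof -
  have "i \<in> set (sorted_list_of_set {i. i < length w \<and> w ! i})"
    using assms by simp
  then show ?thesis
    using that by (auto simp only: in_set_conv_nth edge_pos_def length_sorted_list_of_set card_edge_positions)
qed

lemma vertex_of_edge_conv_card:
  assumes "i \<le> length w"
  shows "vertex_of_edge w i = card {k. k < i \<and> w ! k}"
proof -
  have "{k. k < length (take i w) \<and> take i w ! k} = {k. k < i \<and> w ! k}"
    using assms by auto
  then show ?thesis by (simp add: vertex_of_edge_def length_filter_conv_card)
qed

lemma vertex_of_edge_Suc:
  "i < length w \<Longrightarrow> vertex_of_edge w (Suc i) = (if w ! i then Suc (vertex_of_edge w i) else vertex_of_edge w i)"
  by (simp add: vertex_of_edge_def take_Suc_conv_app_nth)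

lemma vertex_of_edge_edge_pos:
  assumes j: "j < length (filter id w)"
  shows "vertex_of_edge w (edge_pos w j) = j"
proof -
  have "{k. k < edge_pos w j \<and> w ! k} = edge_pos w ` {..<j}"
  proof
    show "{k. k < edge_pos w j \<and> w ! k} \<subseteq> edge_pos w ` {..<j}"
    proof clarify
      fix k assume k: "k < edge_pos w j" "w ! k"
      then obtain i where i: "i < length (filter id w)" "edge_pos w i = k"
        using edge_pos_is_edge[OF j] edge_pos_surj[of k w] by auto
      then have "i < j"
        using k edge_pos_strict_mono[of j i w] by (metis linorder_neqE_nat order.asym)
      then show "k \<in> edge_pos w ` {..<j}" using i by auto
    qed
    show "edge_pos w ` {..<j} \<subseteq> {k. k < edge_pos w j \<and> w ! k}"
      using edge_pos_strict_mono[of _ j w] edge_pos_is_edge[of _ w] j by auto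
  qed
  moreover have "inj_on (edge_pos w) {..<j}"
    using edge_pos_strict_mono[of _ _ w] j by (intro inj_onI) (metis lessThan_iff less_trans nat_neq_iff)
  ultimately show ?thesis
    using edge_pos_is_edge[OF j] by (simp add: vertex_of_edge_conv_card card_image)
qed

lemma edge_pos_vertex_of_edge:
  assumes "i < length w" "w ! i"
  shows "edge_pos w (vertex_of_edge w i) = i"
  using edge_pos_surj[OF assms] vertex_of_edge_edge_pos by metis

lemma vertex_of_edge_pred_edge_pos:
  assumes "0 < j" "j < length (filter id w)" "w ! (edge_pos w j - 1)"
  shows "vertex_of_edge w (edge_pos w j - 1) = j - 1"
proof -
  have "Suc (edge_pos w j - 1) = edge_pos w j"
    using edge_pos_strict_mono[of 0 j w] assms by simp
  moreover have "edge_pos w j < length w"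
    using edge_pos_is_edge[OF assms(2)] by simp
  ultimately have "vertex_of_edge w (edge_pos w j) = Suc (vertex_of_edge w (edge_pos w j - 1))"
    using vertex_of_edge_Suc[of "edge_pos w j - 1" w] assms(3) by simp
  then show ?thesis
    using vertex_of_edge_edge_pos[OF assms(2)] by simp
qed

section \<open>The graph G as a completed functional digraph\<close>

definition thorn_preceded :: "bool list \<Rightarrow> nat set" where
  "thorn_preceded w = {j. 0 < j \<and> j < length (filter id w) \<and> \<not> w ! (edge_pos w j - 1)}"

lemma arc_target_eq_fill_arcs:
  assumes "0 < j" "j < length (filter id w)"
  shows "arc_target w \<sigma> j = fill_arcs (thorn_preceded w) (\<lambda>j. j - 1) (\<lambda>j. edge_pos w j - 1) fst \<sigma> j"
  using vertex_of_edge_pred_edge_pos[OF assms]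
  by (auto simp: arc_target_def fill_arcs_def thorn_preceded_def assms)

lemma arcs_G_eq_fun_arcs:
  assumes "length (filter id w) = length ds"
  shows "arcs_G ((w, ds), \<sigma>)
    = fun_arcs {0..<length ds} 0 (fill_arcs (thorn_preceded w) (\<lambda>j. j - 1) (\<lambda>j. edge_pos w j - 1) fst \<sigma>)"
  using arc_target_eq_fill_arcs[of _ w \<sigma>] assms
  by (auto simp: arcs_G_def fun_arcs_def)

lemma oriented_tree_fun_arcs_iff:
  assumes "r \<in> V" "\<And>v. v \<in> V \<Longrightarrow> v \<noteq> r \<Longrightarrow> f v \<in> V"
  shows "oriented_tree V (fun_arcs V r f) r \<longleftrightarrow> reaches_root V r f"
  using assms by (auto simp: oriented_tree_def reaches_root_def fun_arcs_iff)

lemma thorn_preceded_white_thorn: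
  "(\<lambda>j. edge_pos w j - 1) ` thorn_preceded w \<subseteq> white_thorns w"
  using edge_pos_is_edge[of _ w] by (fastforce simp: thorn_preceded_def white_thorns_def less_imp_diff_less)

lemma inj_on_thorn_preceded: "inj_on (\<lambda>j. edge_pos w j - 1) (thorn_preceded w)"
proof (rule inj_onI)
  fix i j assume ij: "i \<in> thorn_preceded w" "j \<in> thorn_preceded w" "edge_pos w i - 1 = edge_pos w j - 1"
  then have "0 < i" "0 < j" and len: "i < length (filter id w)" "j < length (filter id w)"
    by (auto simp: thorn_preceded_def)
  then have "0 < edge_pos w i" "0 < edge_pos w j"
    using edge_pos_strict_mono[of 0 _ w] by (metis gr_zeroI not_less_zero)+
  then have "edge_pos w i = edge_pos w j" using ij(3) by arith
  then show "i = j"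
    using len edge_pos_strict_mono[of i j w] edge_pos_strict_mono[of j i w] by (metis nat_neq_iff)
qed

lemma P2_iff_reaches_root:
  assumes "length (filter id w) = length ds" "0 < length ds" "\<sigma> ` white_thorns w \<subseteq> black_thorns ds"
  shows "P2 ((w, ds), \<sigma>) \<longleftrightarrow>
    reaches_root {0..<length ds} 0 (fill_arcs (thorn_preceded w) (\<lambda>j. j - 1) (\<lambda>j. edge_pos w j - 1) fst \<sigma>)"
proof -
  have "fst (\<sigma> (edge_pos w j - 1)) < length ds" if "j \<in> thorn_preceded w" for j
  proof -
    have "\<sigma> (edge_pos w j - 1) \<in> black_thorns ds"
      using that thorn_preceded_white_thorn assms(3) by blast
    then show ?thesis by (cases "\<sigma> (edge_pos w j - 1)") (simp add: black_thorns_def)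
  qed
  then have "fill_arcs (thorn_preceded w) (\<lambda>j. j - 1) (\<lambda>j. edge_pos w j - 1) fst \<sigma> v \<in> {0..<length ds}"
    if "v \<in> {0..<length ds}" for v
    using that by (auto simp: fill_arcs_def)
  then show ?thesis
    unfolding P2_def arcs_G_eq_fun_arcs[OF assms(1)] fst_conv snd_conv using assms(2)
    by (intro oriented_tree_fun_arcs_iff) auto
qed

lemma rooted_forest_pred: "rooted_forest {0..<p::nat} 0 F (\<lambda>j. j - 1)"
  unfolding rooted_forest_def
proof
  fix v :: nat assume "v \<in> {0..<p}"
  then show "\<exists>u\<in>insert 0 F. (v, u) \<in> (fun_arcs ({0..<p} - F) 0 (\<lambda>j. j - 1))\<^sup>*"
  proof (induction v)
    case (Suc v)
    show ?case
    proof (cases "Suc v \<in> F")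
      case False
      then have "(Suc v, v) \<in> fun_arcs ({0..<p} - F) 0 (\<lambda>j. j - 1)"
        using Suc.prems by (simp add: fun_arcs_iff)
      then show ?thesis
        using Suc by (meson atLeastLessThan_iff converse_rtrancl_into_rtrancl le0 Suc_lessD)
    qed auto
  qed auto
qed

lemma reaches_zero_pred_iff:
  assumes "v < (p::nat)"
  shows "(v, 0) \<in> (fun_arcs ({0..<p} - F) 0 (\<lambda>j. j - 1))\<^sup>* \<longleftrightarrow> (\<forall>j. 0 < j \<and> j \<le> v \<longrightarrow> j \<notin> F)"
proof
  assume "(v, 0) \<in> (fun_arcs ({0..<p} - F) 0 (\<lambda>j. j - 1))\<^sup>*"
  then show "\<forall>j. 0 < j \<and> j \<le> v \<longrightarrow> j \<notin> F"
  proof (induction rule: converse_rtrancl_induct)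
    case (step x y)
    then have "x \<notin> F" "x \<noteq> 0" "y = x - 1" by (auto simp: fun_arcs_iff)
    then show ?case using step.IH by (metis Suc_pred' le_Suc_eq neq0_conv)
  qed simp
next
  assume "\<forall>j. 0 < j \<and> j \<le> v \<longrightarrow> j \<notin> F"
  with assms show "(v, 0) \<in> (fun_arcs ({0..<p} - F) 0 (\<lambda>j. j - 1))\<^sup>*"
  proof (induction v)
    case (Suc v)
    then have "(Suc v, v) \<in> fun_arcs ({0..<p} - F) 0 (\<lambda>j. j - 1)"
      by (simp add: fun_arcs_iff)
    then show ?case
      using Suc by (meson converse_rtrancl_into_rtrancl Suc_lessD le_SucI)
  qed simp
qed

lemma edge_pos_eq_self_if_not_thorn_preceded:
  assumes "w ! 0" "v < length (filter id w)" "\<forall>j. 0 < j \<and> j \<le> v \<longrightarrow> j \<notin> thorn_preceded w"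
    and "j \<le> v"
  shows "edge_pos w j = j"
  using assms(4)
proof (induction j)
  case 0
  have "0 < length w"
    using assms(2) length_filter_le[of id w] by linarith
  then show ?case
    using edge_pos_vertex_of_edge[of 0 w] assms(1) by (cases w) (simp_all add: vertex_of_edge_def)
next
  case (Suc j)
  then have j: "Suc j < length (filter id w)" "w ! (edge_pos w (Suc j) - 1)"
    using assms(2,3) by (auto simp: thorn_preceded_def)
  moreover have "edge_pos w (Suc j) - 1 < length w"
    using edge_pos_is_edge[OF j(1)] by linarith
  ultimately have "edge_pos w j = edge_pos w (Suc j) - 1"
    using vertex_of_edge_pred_edge_pos[of "Suc j" w] edge_pos_vertex_of_edge[of "edge_pos w (Suc j) - 1" w]
    by simp
  moreover have "edge_pos w j < edge_pos w (Suc j)"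
    using edge_pos_strict_mono[OF _ j(1)] by simp
  ultimately show ?case
    using Suc by simp
qed

lemma edge_pos_eq_self_if_initial_true:
  assumes "\<forall>i\<le>v. w ! i" "v < length (filter id w)" "i \<le> v"
  shows "edge_pos w i = i"
proof -
  have "{k. k < i \<and> w ! k} = {..<i}"
    using assms by auto
  then have "vertex_of_edge w i = i"
    using vertex_of_edge_conv_card[of i w] assms length_filter_le[of id w] by simp
  then show ?thesis
    using edge_pos_vertex_of_edge[of i w] assms length_filter_le[of id w] by simp
qed

lemma not_thorn_preceded_iff_initial_true:
  assumes "w ! 0" "v < length (filter id w)"
  shows "(\<forall>j. 0 < j \<and> j \<le> v \<longrightarrow> j \<notin> thorn_preceded w) \<longleftrightarrow> (\<forall>i\<le>v. w ! i)"
proof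
  assume "\<forall>j. 0 < j \<and> j \<le> v \<longrightarrow> j \<notin> thorn_preceded w"
  then show "\<forall>i\<le>v. w ! i"
    using edge_pos_eq_self_if_not_thorn_preceded[OF assms] edge_pos_is_edge[of _ w] assms(2)
    by (metis le_less_trans)
next
  assume "\<forall>i\<le>v. w ! i"
  then show "\<forall>j. 0 < j \<and> j \<le> v \<longrightarrow> j \<notin> thorn_preceded w"
    using edge_pos_eq_self_if_initial_true[of v w] assms(2) by (auto simp: thorn_preceded_def)
qed

lemma reaches_zero_iff_initial_true:
  assumes "w ! 0" "v < length (filter id w)"
  shows "(v, 0) \<in> (fun_arcs ({0..<length (filter id w)} - thorn_preceded w) 0 (\<lambda>j. j - 1))\<^sup>*
    \<longleftrightarrow> (\<forall>i\<le>v. w ! i)"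
  using reaches_zero_pred_iff[OF assms(2)] not_thorn_preceded_iff_initial_true[OF assms] by simp

section \<open>Counting permuted star thorn trees\<close>

lemma card_white_thorns: "card (white_thorns w) = length w - length (filter id w)"
  using sum_length_filter_compl[of id w] by (simp add: white_thorns_def length_filter_conv_card)

lemma black_thorns_eq_Sigma: "black_thorns ds = (SIGMA j:{..<length ds}. {..<ds ! j - 1})"
  by (auto simp: black_thorns_def)

lemma card_black_thorns: "card (black_thorns ds) = (\<Sum>j<length ds. ds ! j - 1)"
  by (simp add: black_thorns_eq_Sigma)

lemma card_thorns_star_thorn_tree:
  assumes "(w, ds) \<in> star_thorn_trees lam" "\<forall>x\<in>#lam. 0 < x"
  shows "card (white_thorns w) = sum_mset lam - size lam"
    and "card (black_thorns ds) = sum_mset lam - size lam"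
proof -
  show "card (white_thorns w) = sum_mset lam - size lam"
    using assms(1) by (simp add: star_thorn_trees_def card_white_thorns)
  have "(\<Sum>j<length ds. ds ! j - 1) = (\<Sum>x\<leftarrow>ds. x - 1)"
    by (simp add: sum_list_sum_nth atLeast0LessThan)
  also have "\<dots> = (\<Sum>x\<in>#lam. x - 1)"
    using assms(1) by (simp add: star_thorn_trees_def flip: sum_mset_sum_list)
  finally show "card (black_thorns ds) = sum_mset lam - size lam"
    using assms sum_mset_pred by (simp add: card_black_thorns)
qed

lemma star_thorn_trees_eq_Times:
  "star_thorn_trees lam = bool_lists (sum_mset lam) (size lam) \<times> permutations_of_multiset lam"
  by (auto simp: star_thorn_trees_def bool_lists_def permutations_of_multiset_def)

lemma permuted_stt_filter_eq_Sigma: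
  assumes "\<forall>x\<in>#lam. 0 < x"
  shows "{x \<in> permuted_stt lam. Q x}
    = (SIGMA (w, ds):star_thorn_trees lam. injections (white_thorns w) (black_thorns ds) (\<lambda>\<sigma>. Q ((w, ds), \<sigma>)))"
proof -
  have "bij_betw \<sigma> (white_thorns w) (black_thorns ds) \<longleftrightarrow> inj_on \<sigma> (white_thorns w) \<and> \<sigma> ` white_thorns w \<subseteq> black_thorns ds"
    if "(w, ds) \<in> star_thorn_trees lam" for w ds \<sigma>
    using card_thorns_star_thorn_tree[OF that assms]
    by (intro bij_betw_iff_inj_on_into) (simp_all add: white_thorns_def black_thorns_eq_Sigma)
  then show ?thesis
    by (auto simp: permuted_stt_def injections_def; blast)
qed

lemma card_permuted_stt_filter:
  assumes "\<forall>x\<in>#lam. 0 < x"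
  shows "card {x \<in> permuted_stt lam. Q x}
    = (\<Sum>w\<in>bool_lists (sum_mset lam) (size lam). \<Sum>ds\<in>permutations_of_multiset lam.
         card (injections (white_thorns w) (black_thorns ds) (\<lambda>\<sigma>. Q ((w, ds), \<sigma>))))"
proof -
  have "card {x \<in> permuted_stt lam. Q x} = (\<Sum>(w, ds)\<in>star_thorn_trees lam.
      card (injections (white_thorns w) (black_thorns ds) (\<lambda>\<sigma>. Q ((w, ds), \<sigma>))))"
    unfolding permuted_stt_filter_eq_Sigma[OF assms]
    by (subst card_SigmaI)
      (auto simp: star_thorn_trees_eq_Times finite_bool_lists finite_injections white_thorns_def
        black_thorns_eq_Sigma intro!: sum.cong)
  then show ?thesis
    by (simp add: star_thorn_trees_eq_Times sum.cartesian_product)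
qed

lemma card_injections_thorns:
  assumes "(w, ds) \<in> star_thorn_trees lam" "\<forall>x\<in>#lam. 0 < x"
  shows "card (injections (white_thorns w) (black_thorns ds) (\<lambda>_. True)) = fact (sum_mset lam - size lam)"
  using card_injections[of "white_thorns w" "black_thorns ds"] card_thorns_star_thorn_tree[OF assms]
  by (simp add: white_thorns_def black_thorns_eq_Sigma)

lemma P1_iff: "w \<noteq> [] \<Longrightarrow> P1 ((w, ds), \<sigma>) \<longleftrightarrow> w ! 0"
  by (simp add: P1_def hd_conv_nth)

lemma card_P2_injections:
  assumes tree: "(w, ds) \<in> star_thorn_trees lam" and pos: "\<forall>x\<in>#lam. 0 < x"
    and "w ! 0" and thorns: "size lam < sum_mset lam"
  shows "card (injections (white_thorns w) (black_thorns ds) (\<lambda>\<sigma>. P2 ((w, ds), \<sigma>)))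
       = (\<Sum>v | v < size lam \<and> (\<forall>i\<le>v. w ! i). ds ! v - 1) * fact (sum_mset lam - size lam - 1)"
proof -
  let ?p = "size lam" and ?W = "white_thorns w" and ?T = "black_thorns ds"
  let ?F = "thorn_preceded w" and ?h = "\<lambda>j. edge_pos w j - 1"
  have p: "length ds = ?p" "length (filter id w) = ?p" "0 < ?p"
    using tree thorns by (auto simp: star_thorn_trees_def)
  have card: "card ?W = sum_mset lam - ?p" "card ?T = sum_mset lam - ?p"
    using card_thorns_star_thorn_tree[OF tree pos] by auto
  have "injections ?W ?T (\<lambda>\<sigma>. P2 ((w, ds), \<sigma>))
      = injections ?W ?T (\<lambda>\<sigma>. reaches_root {0..<?p} 0 (fill_arcs ?F (\<lambda>j. j - 1) ?h fst \<sigma>))"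
    using P2_iff_reaches_root[of w ds] p by (auto simp: injections_def)
  moreover have "card (injections ?W ?T (\<lambda>\<sigma>. reaches_root {0..<?p} 0 (fill_arcs ?F (\<lambda>j. j - 1) ?h fst \<sigma>)))
        * fact (card ?T - card ?W)
      = card {t\<in>?T. (fst t, 0) \<in> (fun_arcs ({0..<?p} - ?F) 0 (\<lambda>j. j - 1))\<^sup>*} * fact (card ?T - 1)"
  proof (rule card_reaches_root_injections)
    show "finite ?F" "?F \<subseteq> {0..<?p} - {0}"
      using p by (auto simp: thorn_preceded_def)
    show "?T \<noteq> {}"
      using card thorns by auto
    show "fst ` ?T \<subseteq> {0..<?p}"
      using p by (auto simp: black_thorns_def)
  qed (use card thorn_preceded_white_thorn inj_on_thorn_preceded rooted_forest_pred
        in \<open>auto simp: white_thorns_def black_thorns_eq_Sigma\<close>)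
  moreover have "{t\<in>?T. (fst t, 0) \<in> (fun_arcs ({0..<?p} - ?F) 0 (\<lambda>j. j - 1))\<^sup>*}
      = (SIGMA v:{v. v < ?p \<and> (\<forall>i\<le>v. w ! i)}. {..<ds ! v - 1})"
    using reaches_zero_iff_initial_true[of w] \<open>w ! 0\<close> p by (auto simp: black_thorns_eq_Sigma)
  ultimately show ?thesis
    using card by simp
qed

lemma P2_if_no_thorns:
  assumes tree: "(w, ds) \<in> star_thorn_trees lam" and pos: "\<forall>x\<in>#lam. 0 < x"
    and "1 \<le> size lam" "sum_mset lam = size lam"
    and "\<sigma> \<in> injections (white_thorns w) (black_thorns ds) (\<lambda>_. True)"
  shows "P2 ((w, ds), \<sigma>)"
proof -
  have p: "length ds = size lam" "length (filter id w) = size lam"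
    using tree by (auto simp: star_thorn_trees_def)
  have "white_thorns w = {}"
    using card_thorns_star_thorn_tree(1)[OF tree pos] assms(4) by (simp add: white_thorns_def)
  then have "thorn_preceded w = {}"
    using thorn_preceded_white_thorn[of w] by auto
  then show ?thesis
    using P2_iff_reaches_root[of w ds \<sigma>] p assms(3,5) reaches_root_if_rooted_forest_empty[OF rooted_forest_pred]
    by (auto simp: injections_def)
qed

lemma card_P1_P2_injections:
  assumes tree: "(w, ds) \<in> star_thorn_trees lam" and pos: "\<forall>x\<in>#lam. 0 < x"
    and thorns: "size lam < sum_mset lam"
  shows "card (injections (white_thorns w) (black_thorns ds) (\<lambda>\<sigma>. P1 ((w, ds), \<sigma>) \<and> P2 ((w, ds), \<sigma>)))
       = (\<Sum>v<size lam. if \<forall>i\<le>v. w ! i then ds ! v - 1 else 0) * fact (sum_mset lam - size lam - 1)"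
proof -
  have "w \<noteq> []"
    using tree thorns by (auto simp: star_thorn_trees_def)
  show ?thesis
  proof (cases "w ! 0")
    case True
    then show ?thesis
      using card_P2_injections[OF tree pos True thorns] P1_iff[OF \<open>w \<noteq> []\<close>]
      by (simp add: sum.inter_filter[symmetric] Collect_conj_eq lessThan_def)
  next
    case False
    then show ?thesis
      using P1_iff[OF \<open>w \<noteq> []\<close>] by (auto simp: injections_def)
  qed
qed

lemma P1_P2_if_no_thorns:
  assumes pos: "\<forall>x\<in>#lam. 0 < x" and "1 \<le> size lam" "sum_mset lam = size lam"
  shows "{x \<in> permuted_stt lam. P1 x \<and> P2 x} = permuted_stt lam"
proof -
  have "injections (white_thorns w) (black_thorns ds) (\<lambda>\<sigma>. P1 ((w, ds), \<sigma>) \<and> P2 ((w, ds), \<sigma>))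
      = injections (white_thorns w) (black_thorns ds) (\<lambda>_. True)"
    if tree: "(w, ds) \<in> star_thorn_trees lam" for w ds
  proof -
    have "white_thorns w = {}"
      using card_thorns_star_thorn_tree(1)[OF tree pos] assms(3) by (simp add: white_thorns_def)
    moreover have "0 < length w"
      using tree assms(2,3) by (simp add: star_thorn_trees_def)
    ultimately have "w ! 0" "w \<noteq> []"
      by (auto simp: white_thorns_def)
    then show ?thesis
      using P1_iff P2_if_no_thorns[OF tree pos assms(2,3)] by (auto simp: injections_def)
  qed
  then have "{x \<in> permuted_stt lam. P1 x \<and> P2 x} = {x \<in> permuted_stt lam. True}"
    unfolding permuted_stt_filter_eq_Sigma[OF pos] by (intro Sigma_cong) auto
  then show ?thesis by simp
qed

lemma card_permuted_stt:
  assumes pos: "\<forall>x\<in>#lam. 0 < x"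
  shows "card (permuted_stt lam)
    = (sum_mset lam choose size lam) * card (permutations_of_multiset lam) * fact (sum_mset lam - size lam)"
proof -
  have "card (permuted_stt lam) = card {x \<in> permuted_stt lam. True}"
    by simp
  also have "\<dots> = (\<Sum>w\<in>bool_lists (sum_mset lam) (size lam). \<Sum>ds\<in>permutations_of_multiset lam.
      fact (sum_mset lam - size lam))"
    unfolding card_permuted_stt_filter[OF pos] using card_injections_thorns[OF _ pos]
    by (intro sum.cong refl) (auto simp: star_thorn_trees_eq_Times)
  finally show ?thesis
    by (simp add: card_bool_lists)
qed

lemma card_permuted_stt_P1:
  assumes pos: "\<forall>x\<in>#lam. 0 < x" and "1 \<le> size lam"
  shows "card {x \<in> permuted_stt lam. P1 x}
    = ((sum_mset lam - 1) choose (size lam - 1)) * card (permutations_of_multiset lam) * fact (sum_mset lam - size lam)"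
proof -
  let ?W = "bool_lists (sum_mset lam) (size lam)"
  have "card {x \<in> permuted_stt lam. P1 x}
      = (\<Sum>w\<in>?W. \<Sum>ds\<in>permutations_of_multiset lam. if w ! 0 then fact (sum_mset lam - size lam) else 0)"
    unfolding card_permuted_stt_filter[OF pos]
  proof (intro sum.cong refl)
    fix w ds assume w: "w \<in> ?W" and ds: "ds \<in> permutations_of_multiset lam"
    then have "w \<noteq> []"
      using assms size_le_sum_mset[OF pos] by (auto simp: bool_lists_def)
    then show "card (injections (white_thorns w) (black_thorns ds) (\<lambda>\<sigma>. P1 ((w, ds), \<sigma>)))
        = (if w ! 0 then fact (sum_mset lam - size lam) else 0)"
      using card_injections_thorns[OF _ pos, of w ds] w ds
      by (auto simp: P1_iff injections_def star_thorn_trees_eq_Times)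
  qed
  also have "\<dots> = (\<Sum>w\<in>?W. if w ! 0 then card (permutations_of_multiset lam) * fact (sum_mset lam - size lam) else 0)"
    by (intro sum.cong refl) simp
  also have "\<dots> = card {w \<in> ?W. w ! 0} * card (permutations_of_multiset lam) * fact (sum_mset lam - size lam)"
    by (simp add: sum.inter_filter[symmetric] finite_bool_lists)
  also have "card {w \<in> ?W. w ! 0} = (sum_mset lam - 1) choose (size lam - 1)"
    using card_bool_lists_initial_true[of 0 "size lam" "sum_mset lam"] assms size_le_sum_mset[OF pos] by simp
  finally show ?thesis .
qed

lemma size_mult_card_permuted_stt_P1_P2:
  assumes pos: "\<forall>x\<in>#lam. 0 < x" and p: "1 \<le> size lam" and thorns: "size lam < sum_mset lam"
  shows "size lam * card {x \<in> permuted_stt lam. P1 x \<and> P2 x}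
    = (sum_mset lam choose (size lam - 1)) * card (permutations_of_multiset lam) * fact (sum_mset lam - size lam)"
proof -
  let ?D = "permutations_of_multiset lam" and ?q = "sum_mset lam - size lam"
  have "card {x \<in> permuted_stt lam. P1 x \<and> P2 x}
      = (\<Sum>w\<in>bool_lists (sum_mset lam) (size lam). \<Sum>ds\<in>?D.
          (\<Sum>v<size lam. if \<forall>i\<le>v. w ! i then ds ! v - 1 else 0) * fact (?q - 1))"
    unfolding card_permuted_stt_filter[OF pos]
    using card_P1_P2_injections[OF _ pos thorns]
    by (intro sum.cong refl) (auto simp: star_thorn_trees_eq_Times)
  also have "\<dots> = (sum_mset lam choose (size lam - 1)) * (\<Sum>ds\<in>?D. ds ! 0 - 1) * fact (?q - 1)"
    unfolding sum_distrib_right[symmetric]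
      sum_initial_true_permutations_of_multiset[OF p less_imp_le[OF thorns], of "\<lambda>x. x - 1"] ..
  finally have "size lam * card {x \<in> permuted_stt lam. P1 x \<and> P2 x}
      = (sum_mset lam choose (size lam - 1)) * (size lam * (\<Sum>ds\<in>?D. ds ! 0 - 1)) * fact (?q - 1)"
    by simp
  also have "size lam * (\<Sum>ds\<in>?D. ds ! 0 - 1) = card ?D * ?q"
    using size_mult_sum_hd_permutations_of_multiset[of lam "\<lambda>x. x - 1"] sum_mset_pred[OF pos] by simp
  also have "(sum_mset lam choose (size lam - 1)) * (card ?D * ?q) * fact (?q - 1)
      = (sum_mset lam choose (size lam - 1)) * card ?D * (?q * fact (?q - 1))"
    by (simp only: mult.assoc)
  also have "?q * fact (?q - 1) = fact ?q"
    using thorns by (simp add: fact_reduce[of ?q])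
  finally show ?thesis .
qed

lemma card_permuted_stt_P1_P2:
  assumes pos: "\<forall>x\<in>#lam. 0 < x" and p: "1 \<le> size lam"
  shows "card {x \<in> permuted_stt lam. P1 x \<and> P2 x} * (sum_mset lam - size lam + 1) = card (permuted_stt lam)"
proof (cases "size lam < sum_mset lam")
  case True
  let ?N = "sum_mset lam" and ?p = "size lam"
  have "?N - (?p - 1) = ?N - ?p + 1"
    using p True by simp
  then have "(?N - ?p + 1) * (?N choose (?p - 1)) = ?N * ((?N - 1) choose (?p - 1))"
    using binomial_absorb_comp[of ?N "?p - 1"] by simp
  also have "\<dots> = ?p * (?N choose ?p)"
    using times_binomial_minus1_eq[of ?p ?N] p by simp
  finally have binom: "(?N - ?p + 1) * (?N choose (?p - 1)) = ?p * (?N choose ?p)" .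
  have "?p * (card {x \<in> permuted_stt lam. P1 x \<and> P2 x} * (?N - ?p + 1))
      = (?p * card {x \<in> permuted_stt lam. P1 x \<and> P2 x}) * (?N - ?p + 1)"
    by (simp only: ac_simps)
  also have "\<dots> = ((?N - ?p + 1) * (?N choose (?p - 1))) * card (permutations_of_multiset lam) * fact (?N - ?p)"
    unfolding size_mult_card_permuted_stt_P1_P2[OF pos p True] by (simp only: ac_simps)
  also have "\<dots> = ?p * card (permuted_stt lam)"
    unfolding binom card_permuted_stt[OF pos] by (simp only: ac_simps)
  finally show ?thesis
    using p by (simp only: mult_left_cancel[of ?p] not_one_le_zero)
next
  case False
  then have "sum_mset lam = size lam"
    using size_le_sum_mset[OF pos] by simp
  then show ?thesis
    using P1_P2_if_no_thorns[OF pos p] by simp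
qed

lemma size_mult_card_permuted_stt:
  assumes pos: "\<forall>x\<in>#lam. 0 < x" and p: "1 \<le> size lam"
  shows "size lam * card (permuted_stt lam) = sum_mset lam * card {x \<in> permuted_stt lam. P1 x}"
  using card_permuted_stt[OF pos] card_permuted_stt_P1[OF pos p] times_binomial_minus1_eq[of "size lam" "sum_mset lam"] p
  by (simp add: mult.assoc)

lemma card_permuted_stt_pos:
  assumes pos: "\<forall>x\<in>#lam. 0 < x"
  shows "0 < card (permuted_stt lam)"
proof -
  have "permutations_of_multiset lam \<noteq> {}"
    using ex_mset[of lam] by (auto simp: permutations_of_multiset_def)
  then show ?thesis
    using card_permuted_stt[OF pos] size_le_sum_mset[OF pos] by (simp add: card_gt_0_iff)
qed

lemma ratios_of_nat_identities:
  fixes a b c N p :: nat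
  assumes ac: "a * (N - p + 1) = c" and pc: "p * c = N * b" and "0 < c" "1 \<le> p" "p \<le> N"
  shows "real a / real b = real N / (real p * (real N - real p + 1)) \<and>
    real a / real c = 1 / (real N - real p + 1)"
proof -
  have r: "real N - real p + 1 = real (N - p + 1)"
    using assms(5) by (simp add: of_nat_diff)
  have "0 < N * b"
    using pc assms(3,4) by (metis mult_pos_pos of_nat_0_less_iff less_le_trans zero_less_one)
  then have "b \<noteq> 0"
    by auto
  have "a * (p * (N - p + 1)) = p * (a * (N - p + 1))"
    by (simp only: ac_simps)
  also have "\<dots> = N * b"
    using ac pc by simp
  finally have "real a * (real p * real (N - p + 1)) = real N * real b"
    by (simp only: of_nat_mult[symmetric])
  moreover have "real a * real (N - p + 1) = real c"
    by (simp only: ac of_nat_mult[symmetric])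
  moreover have "real p * real (N - p + 1) \<noteq> 0" "real c \<noteq> 0"
    using assms(3,4) by auto
  ultimately show ?thesis
    unfolding r using \<open>b \<noteq> 0\<close> by (simp add: frac_eq_eq)
qed

theorem proposition5p6:
  fixes lam :: "nat multiset" and N p :: nat
  assumes "\<forall>x \<in># lam. 0 < x"
    and "sum_mset lam = N"
    and "size lam = p"
    and "1 \<le> N"
  shows "real (card {x \<in> permuted_stt lam. P1 x \<and> P2 x})
           / real (card {x \<in> permuted_stt lam. P1 x})
         = real N / (real p * (real N - real p + 1)) \<and>
         real (card {x \<in> permuted_stt lam. P1 x \<and> P2 x})
           / real (card (permuted_stt lam))
         = 1 / (real N - real p + 1)"
proof -
  have "lam \<noteq> {#}"
    using assms(2,4) by auto
  then have p: "1 \<le> size lam"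
    by (simp add: Suc_le_eq nonempty_has_size)
  show ?thesis
    using ratios_of_nat_identities[OF card_permuted_stt_P1_P2[OF assms(1) p]
        size_mult_card_permuted_stt[OF assms(1) p] card_permuted_stt_pos[OF assms(1)] p
        size_le_sum_mset[OF assms(1)]]
    unfolding assms(2,3) .
qed

end
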